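(* If $T$ is a cop-win tree with infinite radius, then $\eta(T)$ is an infinite ordinal and $\rho(T)=\eta(T)+\omega$.
   Context: All graphs are simple and undirected, possibly infinite. For a vertex $v$ of a graph $G$, $N[v]$ denotes its closed neighbourhood. Define binary relations $\leq_\alpha$ on $V(G)$, for every ordinal $\alpha$, by transfinite recursion: $u\leq_0 v$ iff $u=v$; for $\alpha>0$, $u\leq_\alpha v$ iff for every $x\in N[u]$ there exist $y\in N[v]$ and an ordinal $\beta<\alpha$ with $x\leq_\beta y$. The CR-ordinal $\rho(G)$ is the least ordinal $\rho$ with $\leq_\rho=\leq_{\rho+1}$. A graph is cop-win if in the game of Cops and Robbers a single cop has a strategy guaranteeing capture of the robber; equivalently, $\leq_{\rho(G)}=V(G)\times V(G)$ (a tree is cop-win iff it has no ray). For a cop-win graph $G$ and $u,v\in V(G)$, let $\eta(u,v)$ be the least ordinal $\alpha$ with $u\leq_\alpha v$; let $\eta(v)$ be the least ordinal $\alpha$ such that $u\leq_\alpha v$ for all $u\in V(G)$; and let $\eta(G)=\min_{v\in V(G)}\eta(v)$. The radius of a tree is $\min_v\sup_u d(u,v)$ where $d$ is graph distance. *)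

theory Defs
  imports Main "HOL-Library.Extended_Nat"
begin

text \<open>Graphs: a simple undirected graph on the vertex type 'a is a symmetric irreflexive
  relation E (vertex set = UNIV).\<close>

definition simple_graph :: "('a \<Rightarrow> 'a \<Rightarrow> bool) \<Rightarrow> bool" where
  "simple_graph E \<longleftrightarrow> (\<forall>u v. E u v \<longrightarrow> E v u) \<and> (\<forall>u. \<not> E u u)"

definition cnbhd :: "('a \<Rightarrow> 'a \<Rightarrow> bool) \<Rightarrow> 'a \<Rightarrow> 'a set" where
  "cnbhd E v = insert v {u. E v u}"

fun is_walk :: "('a \<Rightarrow> 'a \<Rightarrow> bool) \<Rightarrow> 'a list \<Rightarrow> bool" where
  "is_walk E [] = False"
| "is_walk E [v] = True"
| "is_walk E (u # v # vs) = (E u v \<and> is_walk E (v # vs))"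

definition connected_graph :: "('a \<Rightarrow> 'a \<Rightarrow> bool) \<Rightarrow> bool" where
  "connected_graph E \<longleftrightarrow> (\<forall>u v. \<exists>p. is_walk E p \<and> hd p = u \<and> last p = v)"

definition acyclic_graph :: "('a \<Rightarrow> 'a \<Rightarrow> bool) \<Rightarrow> bool" where
  "acyclic_graph E \<longleftrightarrow> \<not> (\<exists>p. is_walk E p \<and> distinct p \<and> 3 \<le> length p \<and> E (last p) (hd p))"

definition tree :: "('a \<Rightarrow> 'a \<Rightarrow> bool) \<Rightarrow> bool" where
  "tree E \<longleftrightarrow> simple_graph E \<and> connected_graph E \<and> acyclic_graph E"

definition gdist :: "('a \<Rightarrow> 'a \<Rightarrow> bool) \<Rightarrow> 'a \<Rightarrow> 'a \<Rightarrow> nat" where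
  "gdist E u v = (LEAST n. \<exists>p. is_walk E p \<and> hd p = u \<and> last p = v \<and> length p = Suc n)"

definition radius :: "('a \<Rightarrow> 'a \<Rightarrow> bool) \<Rightarrow> enat" where
  "radius E = (INF v. SUP u. enat (gdist E u v))"

text \<open>Cops and Robbers with one cop.  c_i = sigma [r_0,...,r_(i-1)] is the cop's position
  after round i (c_0 = sigma []), r_i the robber's.  In round i+1 the cop moves (to a vertex of
  the closed neighbourhood), then the robber moves.\<close>

definition cop_win :: "('a \<Rightarrow> 'a \<Rightarrow> bool) \<Rightarrow> bool" where
  "cop_win E \<longleftrightarrow> (\<exists>\<sigma> :: 'a list \<Rightarrow> 'a.
     (\<forall>rs r. \<sigma> (rs @ [r]) \<in> cnbhd E (\<sigma> rs)) \<and>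
     (\<forall>r :: nat \<Rightarrow> 'a. (\<forall>i. r (Suc i) \<in> cnbhd E (r i)) \<longrightarrow>
        (\<exists>i. \<sigma> (map r [0..<i]) = r i \<or> \<sigma> (map r [0..<Suc i]) = r i)))"

text \<open>Ordinals are modelled by an arbitrary well-ordered type 'o (an initial segment of the
  ordinals).  The relations \<le>_\<alpha> are defined by transfinite recursion (as an inductive
  predicate, whose least fixed point is the unique solution of the well-founded recursion).\<close>

inductive crle :: "('a \<Rightarrow> 'a \<Rightarrow> bool) \<Rightarrow> 'o::wellorder \<Rightarrow> 'a \<Rightarrow> 'a \<Rightarrow> bool" for E where
  base: "(\<forall>\<beta>. \<alpha> \<le> \<beta>) \<Longrightarrow> crle E \<alpha> u u"
| step: "\<not> (\<forall>\<beta>. \<alpha> \<le> \<beta>) \<Longrightarrow>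
         (\<forall>x\<in>cnbhd E u. \<exists>y\<in>cnbhd E v. \<exists>\<beta><\<alpha>. crle E \<beta> x y) \<Longrightarrow> crle E \<alpha> u v"

definition osucc :: "'o::wellorder \<Rightarrow> 'o" where
  "osucc \<alpha> = (LEAST \<beta>. \<alpha> < \<beta>)"

definition cr_ordinal :: "('a \<Rightarrow> 'a \<Rightarrow> bool) \<Rightarrow> 'o::wellorder" where
  "cr_ordinal E = (LEAST \<alpha>. \<alpha> < osucc \<alpha> \<and> crle E \<alpha> = crle E (osucc \<alpha>))"

definition eta_vertex :: "('a \<Rightarrow> 'a \<Rightarrow> bool) \<Rightarrow> 'a \<Rightarrow> 'o::wellorder" where
  "eta_vertex E v = (LEAST \<alpha>. \<forall>u. crle E \<alpha> u v)"

definition eta_graph :: "('a \<Rightarrow> 'a \<Rightarrow> bool) \<Rightarrow> 'o::wellorder" where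
  "eta_graph E = (LEAST \<alpha>. \<alpha> \<in> range (eta_vertex E))"

definition omega_add :: "'o::wellorder \<Rightarrow> 'o" where
  "omega_add \<alpha> = (LEAST \<gamma>. \<forall>n. (osucc ^^ n) \<alpha> < \<gamma>)"

end

theory Submission
  imports Defs
begin

text \<open>In a tree the relations \<open>\<le>\<^sub>\<alpha>\<close> are monotone along geodesics: if \<open>u \<le>\<^sub>\<alpha> v\<close> then
  \<open>u \<le>\<^sub>\<alpha> w\<close> for every \<open>w\<close> between \<open>v\<close> and \<open>u\<close>, and if \<open>w \<le>\<^sub>\<alpha> v\<close> for some \<open>w \<noteq> v\<close> between
  \<open>v\<close> and \<open>u\<close> then \<open>u \<le>\<^sub>\<alpha> v\<close>.  Hence two adjacent vertices cannot dominate each other below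
  \<open>\<eta>\<close>, and along a non-backtracking walk in which every vertex is dominated below \<open>\<eta>\<close> by
  its successor the ordinals \<open>\<eta>(u,v)\<close> would decrease forever; so some vertex \<open>x\<close> is not
  dominated below \<open>\<eta>\<close> by any other vertex.  By induction on the distance, a vertex at
  distance \<open>k\<close> from \<open>x\<close> is not \<open>\<le>\<^sub>\<beta>\<close> any vertex farther from \<open>x\<close> when \<open>\<beta> < \<eta> + k\<close>, so with
  infinite radius no \<open>\<le>\<^bsub>\<eta>+n\<^esub>\<close> is total.  Conversely, starting from a vertex with
  \<open>\<eta>(v) = \<eta>\<close>, every vertex at distance \<open>k\<close> has \<open>\<eta>(v) \<le> \<eta> + k\<close>, so \<open>\<le>\<^bsub>\<eta>+\<omega>\<^esub>\<close> is total.
  In a cop-win graph the relations stabilise exactly when they become total (otherwise the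
  robber could stay undominated forever), which gives \<open>\<rho> = \<eta> + \<omega>\<close>.  Finally \<open>u \<le>\<^sub>n v\<close>
  forces \<open>d(u,v) \<le> n\<close>, so an infinite radius makes \<open>\<eta>\<close> infinite.\<close>

lemma is_walk_nonempty: "is_walk E p \<Longrightarrow> p \<noteq> []"
  by (cases p) auto

lemma is_walk_Cons: "is_walk E (a # p) \<longleftrightarrow> p = [] \<or> E a (hd p) \<and> is_walk E p"
  by (cases p) auto

lemma is_walk_snoc: "is_walk E (p @ [b]) \<longleftrightarrow> p = [] \<or> is_walk E p \<and> E (last p) b"
  by (induction p) (auto simp: is_walk_Cons)

lemma is_walk_append:
  "is_walk E p \<Longrightarrow> is_walk E q \<Longrightarrow> last p = hd q \<Longrightarrow> is_walk E (p @ tl q)"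
proof (induction p)
  case (Cons a p)
  then show ?case by (cases p; cases q) (auto simp: is_walk_Cons)
qed simp

lemma is_walk_rev: "(\<And>u v. E u v \<Longrightarrow> E v u) \<Longrightarrow> is_walk E p \<Longrightarrow> is_walk E (rev p)"
proof (induction p)
  case (Cons a p)
  then show ?case by (cases "p = []") (simp_all add: is_walk_Cons is_walk_snoc last_rev)
qed simp

lemma connected_graph_induct:
  assumes "connected_graph E" and "S v0" and step: "\<And>a b. E a b \<Longrightarrow> S b \<Longrightarrow> S a"
  shows "S v"
proof -
  obtain p where p: "is_walk E p" "hd p = v" "last p = v0"
    using assms(1) unfolding connected_graph_def by blast
  have "S (last p) \<Longrightarrow> S (hd p)" using p(1)
  proof (induction p)
    case (Cons a p)
    then show ?case by (cases p) (auto simp: is_walk_Cons intro: step)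
  qed simp
  with p assms(2) show ?thesis by simp
qed

lemma crle_iff:
  "crle E \<alpha> u v \<longleftrightarrow> (\<forall>\<beta>. \<alpha> \<le> \<beta>) \<and> u = v \<or>
     \<not> (\<forall>\<beta>. \<alpha> \<le> \<beta>) \<and> (\<forall>x\<in>cnbhd E u. \<exists>y\<in>cnbhd E v. \<exists>\<beta><\<alpha>. crle E \<beta> x y)"
  by (subst crle.simps) blast

lemma crle_bot_iff: "\<forall>\<beta>. \<alpha> \<le> \<beta> \<Longrightarrow> crle E \<alpha> u v \<longleftrightarrow> u = v"
  by (subst crle_iff) blast

lemma crle_step_iff:
  "\<not> (\<forall>\<beta>. \<alpha> \<le> \<beta>) \<Longrightarrow>
     crle E \<alpha> u v \<longleftrightarrow> (\<forall>x\<in>cnbhd E u. \<exists>y\<in>cnbhd E v. \<exists>\<beta><\<alpha>. crle E \<beta> x y)"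
  by (subst crle_iff) blast

lemma not_bot_if_greater: "(\<beta>::'o::wellorder) < \<alpha> \<Longrightarrow> \<not> (\<forall>\<gamma>. \<alpha> \<le> \<gamma>)"
  using leD by blast

lemma cnbhd_self [simp]: "v \<in> cnbhd E v"
  by (simp add: cnbhd_def)

lemma crle_refl: "crle E (\<alpha>::'o::wellorder) u u"
proof (induction \<alpha> arbitrary: u rule: less_induct)
  case (less \<alpha>)
  show ?case
  proof (cases "\<forall>\<beta>. \<alpha> \<le> \<beta>")
    case True
    then show ?thesis by (rule crle.base)
  next
    case False
    then obtain \<beta> where "\<beta> < \<alpha>" by (auto simp: not_le)
    then have "\<forall>x\<in>cnbhd E u. \<exists>y\<in>cnbhd E u. \<exists>\<beta><\<alpha>. crle E \<beta> x y"
      using less.IH by (metis (full_types))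
    with False show ?thesis by (rule crle.step)
  qed
qed

lemma crle_imp_not_bot: "crle E (\<alpha>::'o::wellorder) u v \<Longrightarrow> u \<noteq> v \<Longrightarrow> \<not> (\<forall>\<beta>. \<alpha> \<le> \<beta>)"
  using crle_bot_iff by metis

lemma crle_mono: "crle E (\<beta>::'o::wellorder) u v \<Longrightarrow> \<beta> \<le> \<alpha> \<Longrightarrow> crle E \<alpha> u v"
proof (cases "u = v")
  case False
  assume uv: "crle E \<beta> u v" and "\<beta> \<le> \<alpha>"
  have "\<not> (\<forall>\<gamma>. \<beta> \<le> \<gamma>)" using crle_imp_not_bot[OF uv False] .
  then have nonbot: "\<not> (\<forall>\<gamma>. \<alpha> \<le> \<gamma>)" using \<open>\<beta> \<le> \<alpha>\<close> order_trans by metis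
  have "\<forall>x\<in>cnbhd E u. \<exists>y\<in>cnbhd E v. \<exists>\<gamma><\<beta>. crle E \<gamma> x y"
    using uv unfolding crle_step_iff[OF \<open>\<not> (\<forall>\<gamma>. \<beta> \<le> \<gamma>)\<close>] .
  then have "\<forall>x\<in>cnbhd E u. \<exists>y\<in>cnbhd E v. \<exists>\<gamma><\<alpha>. crle E \<gamma> x y"
    using \<open>\<beta> \<le> \<alpha>\<close> less_le_trans by meson
  then show ?thesis unfolding crle_step_iff[OF nonbot] .
qed (simp add: crle_refl)

lemma le_if_less_osucc: "(\<gamma>::'o::wellorder) < osucc z \<Longrightarrow> \<gamma> \<le> z"
proof (rule ccontr)
  assume "\<gamma> < osucc z" "\<not> \<gamma> \<le> z"
  then show False
    unfolding osucc_def using Least_le[of "\<lambda>\<beta>. z < \<beta>" \<gamma>] by (simp add: not_le)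
qed

lemma less_osucc: "(z::'o::wellorder) < w \<Longrightarrow> z < osucc z"
  unfolding osucc_def by (rule LeastI)

lemma crle_osucc_if_neighbour:
  assumes "\<forall>u. crle E (\<alpha>::'o::wellorder) u w" and "w \<in> cnbhd E v" and "\<alpha> < osucc \<alpha>"
  shows "crle E (osucc \<alpha>) u v"
  unfolding crle_step_iff[OF not_bot_if_greater[OF assms(3)]] using assms by blast

fun play :: "('a list \<Rightarrow> 'a) \<Rightarrow> 'a \<Rightarrow> nat \<Rightarrow> 'a" where
  "play f x0 0 = x0"
| "play f x0 (Suc n) = f (map (play f x0) [0..<Suc n])"

lemma not_cop_win_if_robber_invariant:
  assumes start: "\<And>c. \<exists>x. Safe x c"
    and escape: "\<And>x c c'. Safe x c \<Longrightarrow> c' \<in> cnbhd E c \<Longrightarrow> \<exists>x'\<in>cnbhd E x. Safe x' c'"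
    and apart: "\<And>x c. Safe x c \<Longrightarrow> x \<notin> cnbhd E c"
  shows "\<not> cop_win E"
proof
  assume "cop_win E"
  then obtain \<sigma> where cop_moves: "\<And>rs r. \<sigma> (rs @ [r]) \<in> cnbhd E (\<sigma> rs)"
    and capture: "\<And>r :: nat \<Rightarrow> 'a. \<forall>i. r (Suc i) \<in> cnbhd E (r i) \<Longrightarrow>
        \<exists>i. \<sigma> (map r [0..<i]) = r i \<or> \<sigma> (map r [0..<Suc i]) = r i"
    unfolding cop_win_def by blast
  define reply where "reply rs = (SOME x. x \<in> cnbhd E (last rs) \<and> Safe x (\<sigma> rs))" for rs
  obtain x0 where "Safe x0 (\<sigma> [])" using start by blast
  define r where "r = play reply x0"
  have r_Suc: "r (Suc i) = reply (map r [0..<Suc i])" for i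
    unfolding r_def by (simp only: play.simps)
  have reply_safe: "r (Suc i) \<in> cnbhd E (r i) \<and> Safe (r (Suc i)) (\<sigma> (map r [0..<Suc i]))"
    if safe_i: "Safe (r i) (\<sigma> (map r [0..<i]))" for i
  proof -
    have "\<sigma> (map r [0..<Suc i]) \<in> cnbhd E (\<sigma> (map r [0..<i]))"
      using cop_moves[of "map r [0..<i]" "r i"] by simp
    then obtain x where "x \<in> cnbhd E (r i)" "Safe x (\<sigma> (map r [0..<Suc i]))"
      using escape[OF safe_i] by blast
    then have "x \<in> cnbhd E (last (map r [0..<Suc i])) \<and> Safe x (\<sigma> (map r [0..<Suc i]))"
      by simp
    then have "reply (map r [0..<Suc i]) \<in> cnbhd E (last (map r [0..<Suc i]))
        \<and> Safe (reply (map r [0..<Suc i])) (\<sigma> (map r [0..<Suc i]))"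
      unfolding reply_def by (rule someI)
    moreover have "last (map r [0..<Suc i]) = r i" by simp
    ultimately show ?thesis by (simp only: r_Suc)
  qed
  have safe: "Safe (r i) (\<sigma> (map r [0..<i]))" for i
  proof (induction i)
    case 0
    then show ?case using \<open>Safe x0 (\<sigma> [])\<close> by (simp add: r_def)
  next
    case (Suc i)
    then show ?case using reply_safe by blast
  qed
  obtain i where "\<sigma> (map r [0..<i]) = r i \<or> \<sigma> (map r [0..<Suc i]) = r i"
    using capture reply_safe safe by blast
  moreover have "\<sigma> (map r [0..<Suc i]) \<in> cnbhd E (\<sigma> (map r [0..<i]))"
    using cop_moves[of "map r [0..<i]" "r i"] by simp
  ultimately show False using apart[OF safe[of i]] by auto
qed

lemma crle_total_if_stable:
  assumes conn: "connected_graph E" and "cop_win E"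
    and succ: "(\<alpha>::'o::wellorder) < osucc \<alpha>" and stable: "crle E \<alpha> = crle E (osucc \<alpha>)"
  shows "crle E \<alpha> u v"
proof (rule ccontr)
  assume not_uv: "\<not> crle E \<alpha> u v"
  have undominated: "\<exists>r. \<not> crle E \<alpha> r c" for c
  proof (rule ccontr)
    assume "\<nexists>r. \<not> crle E \<alpha> r c"
    have "\<forall>r. crle E \<alpha> r v"
    proof (rule connected_graph_induct[OF conn, where S = "\<lambda>w. \<forall>r. crle E \<alpha> r w"])
      fix a b assume "E a b" and b: "\<forall>r. crle E \<alpha> r b"
      then have "b \<in> cnbhd E a" by (simp add: cnbhd_def)
      then show "\<forall>r. crle E \<alpha> r a"
        using crle_osucc_if_neighbour[OF b _ succ] stable by simp
    qed (use \<open>\<nexists>r. \<not> crle E \<alpha> r c\<close> in blast)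
    with not_uv show False by blast
  qed
  define Safe where "Safe x c \<longleftrightarrow> (\<forall>y\<in>cnbhd E c. \<not> crle E \<alpha> x y)" for x c
  have flee: "\<exists>x\<in>cnbhd E r. Safe x c" if "\<not> crle E \<alpha> r c" for r c
  proof -
    have "\<not> crle E (osucc \<alpha>) r c" using that stable by simp
    then obtain x where "x \<in> cnbhd E r" "\<forall>y\<in>cnbhd E c. \<forall>\<beta><osucc \<alpha>. \<not> crle E \<beta> x y"
      unfolding crle_step_iff[OF not_bot_if_greater[OF succ]] by blast
    then show ?thesis unfolding Safe_def using succ by blast
  qed
  have "\<not> cop_win E"
  proof (rule not_cop_win_if_robber_invariant)
    show "\<exists>x. Safe x c" for c using undominated flee by blast
    show "\<exists>x'\<in>cnbhd E x. Safe x' c'" if "Safe x c" "c' \<in> cnbhd E c" for x c c'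
      using that flee unfolding Safe_def by blast
    show "x \<notin> cnbhd E c" if "Safe x c" for x c
      using that crle_refl[of E \<alpha> x] unfolding Safe_def by blast
  qed
  with \<open>cop_win E\<close> show False by blast
qed

locale connected_sym_graph =
  fixes E :: "'a \<Rightarrow> 'a \<Rightarrow> bool"
  assumes sym: "E u v \<Longrightarrow> E v u" and conn: "connected_graph E"
begin

abbreviation d :: "'a \<Rightarrow> 'a \<Rightarrow> nat" where "d \<equiv> gdist E"

lemma gdist_shortest_walk:
  obtains p where "is_walk E p" "hd p = u" "last p = v" "length p = Suc (d u v)"
proof -
  obtain p where p: "is_walk E p" "hd p = u" "last p = v"
    using conn unfolding connected_graph_def by blast
  then have "length p = Suc (length p - 1)" using is_walk_nonempty by (cases p) auto
  with p have "\<exists>n p. is_walk E p \<and> hd p = u \<and> last p = v \<and> length p = Suc n" by blast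
  then have "\<exists>p. is_walk E p \<and> hd p = u \<and> last p = v \<and> length p = Suc (d u v)"
    unfolding gdist_def by (rule LeastI_ex)
  then show ?thesis using that by blast
qed

lemma gdist_le_walk: "is_walk E p \<Longrightarrow> hd p = u \<Longrightarrow> last p = v \<Longrightarrow> d u v \<le> length p - 1"
  unfolding gdist_def
  by (rule Least_le) (metis Suc_pred' is_walk_nonempty length_greater_0_conv)

lemma gdist_self [simp]: "d u u = 0"
  using gdist_le_walk[of "[u]" u u] by simp

lemma gdist_eq_0_iff [simp]: "d u v = 0 \<longleftrightarrow> u = v"
proof
  assume "d u v = 0"
  then show "u = v" by (metis gdist_shortest_walk last_ConsL length_Suc_conv list.sel(1) length_0_conv)
qed simp

lemma gdist_edge: "E u v \<Longrightarrow> d u v \<le> 1"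
  using gdist_le_walk[of "[u, v]" u v] by simp

lemma gdist_sym: "d u v = d v u"
proof -
  have "d v u \<le> d u v" for u v
  proof -
    obtain p where p: "is_walk E p" "hd p = u" "last p = v" "length p = Suc (d u v)"
      by (rule gdist_shortest_walk)
    moreover have "hd (rev p) = v" "last (rev p) = u" using p is_walk_nonempty
      by (auto simp: hd_rev last_rev)
    ultimately show ?thesis using gdist_le_walk[OF is_walk_rev[OF sym]] by fastforce
  qed
  then show ?thesis by (metis le_antisym)
qed

lemma gdist_triangle: "d u w \<le> d u v + d v w"
proof -
  obtain p where p: "is_walk E p" "hd p = u" "last p = v" "length p = Suc (d u v)"
    by (rule gdist_shortest_walk)
  obtain q where q: "is_walk E q" "hd q = v" "last q = w" "length q = Suc (d v w)"
    by (rule gdist_shortest_walk)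
  have "hd (p @ tl q) = u" using p is_walk_nonempty[OF p(1)] by simp
  moreover have "last (p @ tl q) = w" using p q is_walk_nonempty by (cases q) auto
  ultimately
  show ?thesis using gdist_le_walk[OF is_walk_append[OF p(1) q(1)]] p q by simp
qed

lemma gdist_cnbhd: "x \<in> cnbhd E u \<Longrightarrow> d u v \<le> Suc (d x v)"
  using gdist_triangle[of u v x] gdist_edge[of u x] by (auto simp: cnbhd_def)

lemma gdist_SucE:
  assumes "d u v = Suc k"
  obtains u' where "E u u'" "d u' v = k"
proof -
  obtain p where p: "is_walk E p" "hd p = u" "last p = v" "length p = Suc (Suc k)"
    using gdist_shortest_walk assms by metis
  then obtain u' q where pq: "p = u # u' # q" by (cases p; cases "tl p") auto
  with p have "E u u'" "d u' v \<le> k"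
    using gdist_le_walk[of "u' # q" u' v] by auto
  moreover have "Suc k \<le> Suc (d u' v)"
    using gdist_cnbhd[of u' u v] \<open>E u u'\<close> assms by (simp add: cnbhd_def)
  ultimately show ?thesis using that by simp
qed

lemma gdist_attains: "j \<le> d c x \<Longrightarrow> \<exists>y. d y x = j"
proof (induction "d c x" arbitrary: c)
  case (Suc k)
  obtain c' where "E c c'" "d c' x = k" using Suc.hyps(2)[symmetric] by (rule gdist_SucE)
  then show ?case using Suc by (cases "j = Suc k") auto
qed auto

lemma equidistant_path:
  assumes "p \<noteq> q" and "d p a = d q a"
  shows "\<exists>L. is_walk E L \<and> distinct L \<and> hd L = p \<and> last L = q \<and> 3 \<le> length L
           \<and> (\<forall>z\<in>set L. d z a \<le> d p a)"
  using assms
proof (induction "d p a" arbitrary: p q)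
  \<comment> \<open>Step both ends towards \<open>a\<close>: the new ends either coincide or, by induction, are joined
    by such a path inside the smaller ball.\<close>
  case 0
  then show ?case by simp
next
  case (Suc k)
  obtain p' where p': "E p p'" "d p' a = k" using gdist_SucE Suc.hyps(2)[symmetric] by metis
  obtain q' where q': "E q q'" "d q' a = k" using gdist_SucE Suc.hyps(2)[symmetric] Suc.prems(2) by metis
  have far: "z \<noteq> p" "z \<noteq> q" if "d z a \<le> k" for z
    using that Suc.hyps(2) Suc.prems(2) by auto
  show ?case
  proof (cases "p' = q'")
    case True
    then show ?thesis
      using p' q' sym[OF q'(1)] far[of p'] Suc by (intro exI[of _ "[p, p', q]"]) auto
  next
    case False
    then obtain L where L: "is_walk E L" "distinct L" "hd L = p'" "last L = q'" "3 \<le> length L"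
        "\<forall>z\<in>set L. d z a \<le> k"
      using Suc.hyps(1)[of p' q'] p' q' by auto
    have "L \<noteq> []" using L(5) by auto
    then have "is_walk E (p # L @ [q])"
      using L p' sym[OF q'(1)] by (simp add: is_walk_Cons is_walk_snoc)
    moreover have "distinct (p # L @ [q])" using L(2,6) far Suc.prems(1) by auto
    ultimately show ?thesis using L(5,6) Suc.hyps(2) Suc.prems(2)
      by (intro exI[of _ "p # L @ [q]"]) fastforce
  qed
qed

lemma crle_gdist_le:
  "crle E (\<alpha>::'o::wellorder) u v \<Longrightarrow> finite {\<beta>. \<beta> < \<alpha>} \<Longrightarrow> d u v \<le> card {\<beta>. \<beta> < \<alpha>}"
proof (induction \<alpha> arbitrary: v rule: less_induct)
  case (less \<alpha>)
  show ?case
  proof (cases "u = v")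
    case False
    then obtain y \<beta> where y: "y \<in> cnbhd E v" "\<beta> < \<alpha>" "crle E \<beta> u y"
      using less.prems(1) crle_step_iff[OF crle_imp_not_bot[OF less.prems(1)]] cnbhd_self by metis
    have fewer: "{\<gamma>. \<gamma> < \<beta>} \<subset> {\<gamma>. \<gamma> < \<alpha>}" using y(2) by auto
    then have "finite {\<gamma>. \<gamma> < \<beta>}" using less.prems(2) finite_subset by auto
    then have "d u y \<le> card {\<gamma>. \<gamma> < \<beta>}" using less.IH[OF y(2) y(3)] by blast
    moreover have "card {\<gamma>. \<gamma> < \<beta>} < card {\<gamma>. \<gamma> < \<alpha>}"
      using psubset_card_mono[OF less.prems(2) fewer] .
    moreover have "d u v \<le> Suc (d u y)"
      using gdist_cnbhd[OF y(1), of u] by (simp add: gdist_sym)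
    ultimately show ?thesis by linarith
  qed simp
qed

end

locale tree_graph = connected_sym_graph +
  assumes irrefl: "\<not> E u u" and acyclic: "acyclic_graph E"
begin

lemma no_closed_path:
  "is_walk E L \<Longrightarrow> distinct L \<Longrightarrow> 3 \<le> length L \<Longrightarrow> E (last L) (hd L) \<Longrightarrow> False"
  using acyclic unfolding acyclic_graph_def by blast

lemma gdist_adjacent_neq: "E x b \<Longrightarrow> d x a \<noteq> d b a"
  using equidistant_path[of x b a] irrefl sym no_closed_path by metis

lemma gdist_pred_unique:
  assumes "E p b" "E q b" "d p a = k" "d q a = k" "d b a = Suc k"
  shows "p = q"
proof (rule ccontr)
  assume "p \<noteq> q"
  then obtain L where L: "is_walk E L" "distinct L" "hd L = p" "last L = q" "3 \<le> length L"
      "\<forall>z\<in>set L. d z a \<le> k"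
    using equidistant_path[of p q a] assms(3,4) by auto
  have "L \<noteq> []" using L(5) by auto
  have "b \<notin> set L" using L(6) assms(5) by force
  show False
  proof (rule no_closed_path[of "L @ [b]"])
    show "is_walk E (L @ [b])" using L assms(2) \<open>L \<noteq> []\<close> by (simp add: is_walk_snoc)
    show "distinct (L @ [b])" using L(2) \<open>b \<notin> set L\<close> by simp
    show "E (last (L @ [b])) (hd (L @ [b]))" using assms(1) sym L(3) \<open>L \<noteq> []\<close> by simp
  qed (use L(5) in simp)
qed

lemma gdist_edge_eq_1: "E x b \<Longrightarrow> d x b = 1"
  using gdist_edge[of x b] irrefl[of x] by (cases "d x b") auto

lemma gdist_edge_cases: "E x b \<Longrightarrow> d u b = Suc (d u x) \<or> d u x = Suc (d u b)"
  using gdist_adjacent_neq[of x b u] gdist_triangle[of u b x] gdist_triangle[of u x b]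
    gdist_edge_eq_1[of x b] gdist_edge_eq_1[OF sym, of x b]
  by (simp add: gdist_sym[of _ u]) linarith

definition between :: "'a \<Rightarrow> 'a \<Rightarrow> 'a \<Rightarrow> bool" where
  "between a w b \<longleftrightarrow> d a w + d w b = d a b"

lemma between_sym: "between a w b \<longleftrightarrow> between b w a"
  unfolding between_def by (simp add: gdist_sym[of a w] gdist_sym[of w b] gdist_sym[of a b] add.commute)

lemma between_self: "between u w u \<Longrightarrow> w = u"
  unfolding between_def by (metis add_is_0 gdist_eq_0_iff gdist_self)

lemma between_cnbhd:
  assumes aw: "between a w b" and "w \<noteq> b" and b': "b' \<in> cnbhd E b"
  shows "between a w b'"
proof (cases "b' = b")
  case False
  then have e: "E b b'" using b' by (auto simp: cnbhd_def)
  have tri: "d a b' \<le> d a w + d w b'" by (rule gdist_triangle)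
  from gdist_edge_cases[OF e, of a] show ?thesis
  proof
    assume "d a b' = Suc (d a b)"
    moreover have "d w b' \<le> Suc (d w b)"
      using gdist_cnbhd[of b b' w] sym[OF e] by (simp add: cnbhd_def gdist_sym[of w])
    ultimately show ?thesis using aw tri unfolding between_def by linarith
  next
    assume b'_closer: "d a b = Suc (d a b')"
    \<comment> \<open>Then \<open>b'\<close> is the unique neighbour of \<open>b\<close> towards \<open>a\<close>, so it is also the first step
      from \<open>b\<close> towards \<open>w\<close>.\<close>
    obtain k where k: "d b w = Suc k" using \<open>w \<noteq> b\<close> by (cases "d b w") auto
    then obtain p where p: "E b p" "d p w = k" by (rule gdist_SucE)
    have "d w p = k" "d w b = Suc k" using p k by (simp_all add: gdist_sym[of w])
    moreover have "d a b \<le> Suc (d a p)"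
      using gdist_triangle[of a b p] gdist_edge[OF sym[OF p(1)]] by simp
    ultimately have "d a p = d a b'"
      using gdist_triangle[of a p w] aw b'_closer unfolding between_def by linarith
    then have "p = b'"
      using gdist_pred_unique[OF sym[OF p(1)] sym[OF e], of a "d b' a"] b'_closer
      by (simp add: gdist_sym[of p a] gdist_sym[of b' a] gdist_sym[of b a])
    then show ?thesis using \<open>d w p = k\<close> \<open>d w b = Suc k\<close> aw b'_closer
      unfolding between_def by simp
  qed
qed (use aw in simp)

lemma between_extend:
  assumes "between a p b" and "E p b" and "x \<in> cnbhd E b" and "x \<noteq> p"
  shows "between a b x"
proof (cases "x = b")
  case False
  then have e: "E b x" using assms(3) by (auto simp: cnbhd_def)
  from gdist_edge_cases[OF e, of a] show ?thesis
  proof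
    assume "d a x = Suc (d a b)"
    then show ?thesis using gdist_edge_eq_1[OF e] unfolding between_def by simp
  next
    assume "d a b = Suc (d a x)"
    moreover have "d a b = Suc (d a p)"
      using assms(1) gdist_edge_eq_1[OF assms(2)] unfolding between_def by simp
    ultimately have "x = p"
      using gdist_pred_unique[OF sym[OF e] assms(2), of a "d x a"]
      by (simp add: gdist_sym[of x a] gdist_sym[of p a] gdist_sym[of b a])
    with assms(4) show ?thesis by simp
  qed
qed (simp add: between_def)

lemma crle_toward:
  "crle E (\<alpha>::'o::wellorder) u v \<Longrightarrow> between v w u \<Longrightarrow> crle E \<alpha> u w"
proof (induction \<alpha> arbitrary: u v w rule: less_induct)
  case (less \<alpha>)
  consider "w = v" | "w = u" | "w \<noteq> v" "w \<noteq> u" by blast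
  then show ?case
  proof cases
    case 1
    with less.prems(1) show ?thesis by simp
  next
    case 2
    then show ?thesis by (simp add: crle_refl)
  next
    case 3
    then have "u \<noteq> v" using less.prems(2) between_self by metis
    note step_iff = crle_step_iff[OF crle_imp_not_bot[OF less.prems(1) this]]
    show ?thesis unfolding step_iff
    proof
      fix x assume x: "x \<in> cnbhd E u"
      then obtain y \<beta> where y: "y \<in> cnbhd E v" "\<beta> < \<alpha>" "crle E \<beta> x y"
        using bspec[OF less.prems(1)[unfolded step_iff] x] by blast
      have "between x w v"
        using between_cnbhd[OF less.prems(2) \<open>w \<noteq> u\<close> x] by (simp add: between_sym)
      then have "between y w x"
        using between_cnbhd[OF _ \<open>w \<noteq> v\<close> y(1)] by (simp add: between_sym)
      then have "crle E \<beta> x w" using less.IH[OF y(2,3)] by simp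
      then show "\<exists>y\<in>cnbhd E w. \<exists>\<beta><\<alpha>. crle E \<beta> x y" using y(2) cnbhd_self by metis
    qed
  qed
qed

lemma crle_beyond:
  "crle E (\<alpha>::'o::wellorder) w v \<Longrightarrow> between v w u \<Longrightarrow> w \<noteq> v \<Longrightarrow> crle E \<alpha> u v"
proof (induction \<alpha> arbitrary: u v w rule: less_induct)
  case (less \<alpha>)
  note step_iff = crle_step_iff[OF crle_imp_not_bot[OF less.prems(1,3)]]
  have w_nbhd: "\<forall>x\<in>cnbhd E w. \<exists>y\<in>cnbhd E v. \<exists>\<beta><\<alpha>. crle E \<beta> x y"
    using less.prems(1) unfolding step_iff .
  show ?case
  proof (cases "u = w")
    case False
    obtain k where "d w u = Suc k" using False by (cases "d w u") auto
    then obtain w' where w': "E w w'" "d w' u = k" by (rule gdist_SucE)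
    have "d v w' \<le> Suc (d v w)" "d v u \<le> d v w' + k"
      using gdist_triangle[of v w' w] gdist_edge_eq_1[OF w'(1)] gdist_triangle[of v u w'] w'(2)
      by auto
    then have w'_between: "between v w' u" and w'_far: "d v w' = Suc (d v w)"
      using less.prems(2) \<open>d w u = Suc k\<close> w'(2) unfolding between_def by linarith+
    \<comment> \<open>The answer \<open>y\<close> to the step \<open>w \<rightarrow> w'\<close> towards \<open>u\<close> serves every \<open>x \<in> N[u]\<close> except \<open>w\<close>.\<close>
    have "w' \<in> cnbhd E w" using w'(1) by (simp add: cnbhd_def)
    then obtain y \<beta> where y: "y \<in> cnbhd E v" "\<beta> < \<alpha>" "crle E \<beta> w' y"
      using bspec[OF w_nbhd] by blast
    have "w' \<noteq> y"
      using w'_far less.prems(3) gdist_edge[of v y] y(1) by (auto simp: cnbhd_def)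
    show ?thesis unfolding step_iff
    proof
      fix x assume x: "x \<in> cnbhd E u"
      show "\<exists>y\<in>cnbhd E v. \<exists>\<beta><\<alpha>. crle E \<beta> x y"
      proof (cases "x = w")
        case False
        have "between v w' x"
        proof (cases "w' = u")
          case True
          then show ?thesis using between_extend[OF less.prems(2) _ x False] w'(1) by simp
        qed (use between_cnbhd[OF w'_between _ x] in simp)
        moreover have "w' \<noteq> v" using w'_far by auto
        ultimately have "between y w' x" using between_cnbhd[OF _ _ y(1)] by (simp add: between_sym)
        then have "crle E \<beta> x y" using less.IH[OF y(2,3) _ \<open>w' \<noteq> y\<close>] by simp
        then show ?thesis using y(1,2) by metis
      qed (use w_nbhd in simp)
    qed
  qed (use less.prems in simp)
qed

lemma crle_all_if_mutual:
  assumes e: "E x b" and xb: "crle E (\<beta>1::'o::wellorder) x b" and bx: "crle E \<beta>2 b x"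
  shows "crle E (max \<beta>1 \<beta>2) u x"
proof -
  have "x \<noteq> b" using e irrefl by auto
  from gdist_edge_cases[OF e, of u] show ?thesis
  proof
    assume "d u b = Suc (d u x)"
    then have "between b x u" unfolding between_def
      using gdist_edge_eq_1[OF sym[OF e]] by (simp add: gdist_sym[of b u] gdist_sym[of x u])
    then have "crle E \<beta>1 u x" using crle_toward[OF crle_beyond[OF xb _ \<open>x \<noteq> b\<close>]] by simp
    then show ?thesis using crle_mono max.cobounded1 by metis
  next
    assume "d u x = Suc (d u b)"
    then have "between x b u" unfolding between_def
      using gdist_edge_eq_1[OF e] by (simp add: gdist_sym[of b u] gdist_sym[of x u])
    then have "crle E \<beta>2 u x" using crle_beyond[OF bx] \<open>x \<noteq> b\<close> by simp
    then show ?thesis using crle_mono max.cobounded2 by metis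
  qed
qed

end

locale cop_win_tree = tree_graph E for E :: "'a \<Rightarrow> 'a \<Rightarrow> bool" +
  fixes \<alpha>0 :: "'o::wellorder"
  assumes cop_win: "cop_win E"
    and succ_\<alpha>0: "\<alpha>0 < osucc \<alpha>0" and stable_\<alpha>0: "crle E \<alpha>0 = crle E (osucc \<alpha>0)"
begin

definition rho :: 'o where
  "rho = (LEAST \<alpha>. \<forall>u v. crle E \<alpha> u v)"

lemma crle_rho: "crle E rho u v"
proof -
  have "\<forall>u v. crle E \<alpha>0 u v"
    using crle_total_if_stable[OF conn cop_win succ_\<alpha>0 stable_\<alpha>0] by blast
  then have "\<forall>u v. crle E rho u v" unfolding rho_def by (rule LeastI)
  then show ?thesis by blast
qed

lemma rho_le: "\<forall>u v. crle E \<alpha> u v \<Longrightarrow> rho \<le> \<alpha>"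
  unfolding rho_def by (rule Least_le)

lemma cr_ordinal_eq_rho: "cr_ordinal E = rho"
  unfolding cr_ordinal_def
proof (rule Least_equality)
  have "rho < osucc \<alpha>0"
    using rho_le[of \<alpha>0] crle_total_if_stable[OF conn cop_win succ_\<alpha>0 stable_\<alpha>0] succ_\<alpha>0
    by (meson le_less_trans)
  then have "rho < osucc rho" by (rule less_osucc)
  moreover have "crle E rho = crle E (osucc rho)"
    using crle_rho crle_mono[OF crle_rho less_imp_le[OF calculation]] by blast
  ultimately show "rho < osucc rho \<and> crle E rho = crle E (osucc rho)" by blast
next
  fix \<alpha> :: 'o
  assume "\<alpha> < osucc \<alpha> \<and> crle E \<alpha> = crle E (osucc \<alpha>)"
  then show "rho \<le> \<alpha>" using crle_total_if_stable[OF conn cop_win] rho_le by blast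
qed

definition eta_pair :: "'a \<Rightarrow> 'a \<Rightarrow> 'o" where
  "eta_pair u v = (LEAST \<alpha>. crle E \<alpha> u v)"

lemma crle_eta_pair: "crle E (eta_pair u v) u v"
  unfolding eta_pair_def by (rule LeastI[of _ rho]) (rule crle_rho)

lemma eta_pair_le: "crle E \<alpha> u v \<Longrightarrow> eta_pair u v \<le> \<alpha>"
  unfolding eta_pair_def by (rule Least_le)

abbreviation eta :: 'o where
  "eta \<equiv> eta_graph E"

lemma crle_eta_vertex: "crle E (eta_vertex E v :: 'o) u v"
proof -
  have "\<forall>u. crle E (eta_vertex E v :: 'o) u v"
    unfolding eta_vertex_def by (rule LeastI[of _ rho]) (simp add: crle_rho)
  then show ?thesis by blast
qed

lemma eta_vertex_le: "\<forall>u. crle E \<alpha> u v \<Longrightarrow> eta_vertex E v \<le> \<alpha>"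
  unfolding eta_vertex_def by (rule Least_le)

lemma eta_le_eta_vertex: "eta \<le> eta_vertex E v"
  unfolding eta_graph_def by (rule Least_le) simp

lemma eta_attained: obtains v0 where "eta = eta_vertex E v0"
proof -
  have "eta \<in> range (eta_vertex E)"
    unfolding eta_graph_def by (rule LeastI[of _ "eta_vertex E undefined"]) simp
  then show ?thesis using that by blast
qed

lemma eta_pair_decreasing:
  assumes "E b x" and "E x y" and "y \<noteq> b"
  shows "eta_pair y x < eta_pair x b"
proof -
  have "x \<noteq> b" using assms(1) irrefl by auto
  note step_iff = crle_step_iff[OF crle_imp_not_bot[OF crle_eta_pair \<open>x \<noteq> b\<close>]]
  have "y \<in> cnbhd E x" using assms(2) by (simp add: cnbhd_def)
  then obtain y' \<beta> where y': "y' \<in> cnbhd E b" "\<beta> < eta_pair x b" "crle E \<beta> y y'"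
    using bspec[OF crle_eta_pair[of x b, unfolded step_iff]] by blast
  have "between b x y"
    using between_extend[of b b x y] assms \<open>y \<in> cnbhd E x\<close> by (simp add: between_def)
  then have "between y' x y"
    using between_cnbhd[OF _ \<open>x \<noteq> b\<close> y'(1)] by (simp add: between_sym)
  then have "eta_pair y x \<le> \<beta>" using eta_pair_le crle_toward[OF y'(3)] by blast
  then show ?thesis using y'(2) by (rule le_less_trans)
qed

lemma no_mutual_crle_below_eta:
  assumes "E x b" and "\<beta>1 < eta" and "\<beta>2 < eta"
    and "crle E \<beta>1 x b" and "crle E \<beta>2 b x"
  shows False
proof -
  have "eta_vertex E x \<le> max \<beta>1 \<beta>2"
    using crle_all_if_mutual[OF assms(1,4,5)] eta_vertex_le by blast
  with eta_le_eta_vertex[of x] have "eta \<le> max \<beta>1 \<beta>2" by (rule order_trans)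
  with assms(2,3) show False by (metis le_max_iff_disj leD)
qed

lemma ex_vertex_not_crle_below_eta: "\<exists>x. \<forall>c \<beta>. c \<noteq> x \<longrightarrow> \<beta> < eta \<longrightarrow> \<not> crle E \<beta> x c"
proof (rule ccontr)
  assume "\<nexists>x. \<forall>c \<beta>. c \<noteq> x \<longrightarrow> \<beta> < eta \<longrightarrow> \<not> crle E \<beta> x c"
  then have "\<exists>b. E x b \<and> (\<exists>\<beta><eta. crle E \<beta> x b)" for x
  proof -
    obtain c \<beta> where c: "c \<noteq> x" "\<beta> < eta" "crle E \<beta> x c"
      using \<open>\<nexists>x. _\<close> by blast
    obtain k where k: "d x c = Suc k" using c(1) by (cases "d x c") auto
    then obtain b where b: "E x b" "d b c = k" by (rule gdist_SucE)
    have "between c b x" unfolding between_def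
      using k b gdist_edge_eq_1[OF sym[OF b(1)]] by (simp add: gdist_sym[of c b] gdist_sym[of c x])
    then show ?thesis using crle_toward[OF c(3)] b(1) c(2) by blast
  qed
  then obtain next_vertex where next_vertex:
    "\<And>x. E x (next_vertex x) \<and> (\<exists>\<beta><eta. crle E \<beta> x (next_vertex x))"
    by metis
  have no_return: "next_vertex (next_vertex x) \<noteq> x" for x
    using next_vertex[of x] next_vertex[of "next_vertex x"] no_mutual_crle_below_eta by metis
  define walk where "walk n = (next_vertex ^^ n) undefined" for n
  have walk_Suc: "walk (Suc n) = next_vertex (walk n)" for n
    by (simp add: walk_def)
  have "eta_pair (walk (Suc (Suc n))) (walk (Suc n)) < eta_pair (walk (Suc n)) (walk n)" for n
    unfolding walk_Suc using eta_pair_decreasing next_vertex no_return by metis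
  moreover obtain n where "((\<lambda>n. eta_pair (walk (Suc n)) (walk n)) (Suc n),
      (\<lambda>n. eta_pair (walk (Suc n)) (walk n)) n) \<notin> {(x, y). x < y}"
    by (rule wf_no_infinite_down_chainE[OF wellorder_class.wf])
  ultimately show False by simp
qed

abbreviation eta_plus :: "nat \<Rightarrow> 'o" where
  "eta_plus n \<equiv> (osucc ^^ n) eta"

text \<open>\<open>below_eta_plus k \<beta>\<close> means \<open>\<beta> < \<eta> + k\<close>; it is phrased so as not to presuppose that
  \<open>\<eta> + j\<close> has a successor in \<open>'o\<close>.\<close>

definition below_eta_plus :: "nat \<Rightarrow> 'o \<Rightarrow> bool" where
  "below_eta_plus k \<beta> \<longleftrightarrow> \<beta> < eta \<or> (\<exists>j<k. \<beta> \<le> eta_plus j)"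

lemma below_eta_plus_Suc: "below_eta_plus (Suc k) \<beta> \<Longrightarrow> \<gamma> < \<beta> \<Longrightarrow> below_eta_plus k \<gamma>"
proof (unfold below_eta_plus_def, elim disjE exE conjE)
  fix j assume "j < Suc k" "\<beta> \<le> eta_plus j" "\<gamma> < \<beta>"
  have "\<gamma> < eta_plus j" using \<open>\<gamma> < \<beta>\<close> \<open>\<beta> \<le> eta_plus j\<close> by (rule less_le_trans)
  show "\<gamma> < eta \<or> (\<exists>j<k. \<gamma> \<le> eta_plus j)"
  proof (cases j)
    case (Suc i)
    then have "\<gamma> \<le> eta_plus i" using \<open>\<gamma> < eta_plus j\<close> le_if_less_osucc by simp
    then show ?thesis using \<open>j < Suc k\<close> Suc by auto
  qed (use \<open>\<gamma> < eta_plus j\<close> in simp)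
qed (meson less_trans)

lemma not_crle_if_farther:
  assumes x: "\<forall>c \<beta>. c \<noteq> x \<longrightarrow> \<beta> < eta \<longrightarrow> \<not> crle E \<beta> x c"
  shows "d y x = k \<Longrightarrow> k < d c x \<Longrightarrow> below_eta_plus k \<beta> \<Longrightarrow> \<not> crle E \<beta> y c"
proof (induction k arbitrary: y c \<beta>)
  case 0
  then have "y = x" "c \<noteq> x" "\<beta> < eta" by (auto simp: below_eta_plus_def)
  then show ?case using x by blast
next
  case (Suc k)
  show ?case
  proof
    assume c: "crle E \<beta> y c"
    have "y \<noteq> c" using Suc.prems(1,2) by auto
    note step_iff = crle_step_iff[OF crle_imp_not_bot[OF c this]]
    obtain x' where x': "E y x'" "d x' x = k" using Suc.prems(1) by (rule gdist_SucE)
    then have "x' \<in> cnbhd E y" by (simp add: cnbhd_def)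
    then obtain y' \<gamma> where y': "y' \<in> cnbhd E c" "\<gamma> < \<beta>" "crle E \<gamma> x' y'"
      using bspec[OF c[unfolded step_iff]] by blast
    have "k < d y' x" using gdist_cnbhd[OF y'(1), of x] Suc.prems(2) by simp
    with x'(2) have "\<not> crle E \<gamma> x' y'"
      using Suc.IH below_eta_plus_Suc[OF Suc.prems(3) y'(2)] by blast
    with y'(3) show False by contradiction
  qed
qed

lemma rho_le_if_above_eta_plus:
  assumes above: "\<forall>n. eta_plus n < \<gamma>"
  shows "rho \<le> \<gamma>"
proof -
  obtain v0 where v0: "eta = eta_vertex E v0" by (rule eta_attained)
  have "\<exists>k. \<forall>u. crle E (eta_plus k) u v" for v
  proof (rule connected_graph_induct[OF conn, where S = "\<lambda>v. \<exists>k. \<forall>u. crle E (eta_plus k) u v"])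
    show "\<exists>k. \<forall>u. crle E (eta_plus k) u v0" using crle_eta_vertex v0 by (metis funpow_0)
  next
    fix a b assume "E a b" and "\<exists>k. \<forall>u. crle E (eta_plus k) u b"
    then obtain k where k: "\<forall>u. crle E (eta_plus k) u b" and b: "b \<in> cnbhd E a"
      by (auto simp: cnbhd_def)
    have "eta_plus k < osucc (eta_plus k)" using less_osucc above by blast
    then have "\<forall>u. crle E (eta_plus (Suc k)) u a"
      using crle_osucc_if_neighbour[OF k b] by simp
    then show "\<exists>k. \<forall>u. crle E (eta_plus k) u a" by blast
  qed
  then have "\<forall>u v. crle E \<gamma> u v"
    using crle_mono above less_imp_le by metis
  then show ?thesis by (rule rho_le)
qed

end

locale unbounded_cop_win_tree = cop_win_tree +
  assumes infinite_radius: "radius E = \<infinity>"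
begin

lemma gdist_unbounded: "\<exists>u. m < d u v"
proof (rule ccontr)
  assume "\<nexists>u. m < d u v"
  then have "(SUP u. enat (d u v)) \<le> enat m" by (auto intro: SUP_least simp: not_less)
  moreover have "radius E \<le> (SUP u. enat (d u v))" unfolding radius_def by (rule INF_lower) simp
  ultimately show False using infinite_radius by simp
qed

lemma eta_plus_not_total: "\<exists>u v. \<not> crle E (eta_plus n) u v"
proof -
  obtain x where x: "\<forall>c \<beta>. c \<noteq> x \<longrightarrow> \<beta> < eta \<longrightarrow> \<not> crle E \<beta> x c"
    using ex_vertex_not_crle_below_eta by blast
  obtain c where c: "Suc n < d c x" using gdist_unbounded by blast
  then obtain y where "d y x = Suc n" using gdist_attains[of "Suc n" c x] by auto
  moreover have "below_eta_plus (Suc n) (eta_plus n)" unfolding below_eta_plus_def by auto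
  ultimately have "\<not> crle E (eta_plus n) y c" using not_crle_if_farther[OF x] c by blast
  then show ?thesis by blast
qed

lemma eta_plus_less_rho: "eta_plus n < rho"
  using eta_plus_not_total[of n] crle_mono[OF crle_rho] by (meson not_le)

lemma omega_add_eta_eq_rho: "omega_add eta = rho"
  unfolding omega_add_def
  by (rule Least_equality) (use eta_plus_less_rho rho_le_if_above_eta_plus in blast)+

lemma eta_infinite: "infinite {\<beta>. \<beta> < eta}"
proof
  assume fin: "finite {\<beta>. \<beta> < eta}"
  obtain v0 where v0: "eta = eta_vertex E v0" by (rule eta_attained)
  obtain u where far: "card {\<beta>. \<beta> < eta} < d u v0" using gdist_unbounded by blast
  have "crle E eta u v0" using crle_eta_vertex v0 by simp
  then have "d u v0 \<le> card {\<beta>. \<beta> < eta}" using crle_gdist_le fin by blast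
  with far show False by simp
qed

end

theorem lemma3p3:
  fixes T :: "'a \<Rightarrow> 'a \<Rightarrow> bool"
  assumes "tree T" and "cop_win T" and "radius T = \<infinity>"
    and "\<exists>\<alpha>::'o::wellorder. \<alpha> < osucc \<alpha> \<and> crle T \<alpha> = crle T (osucc \<alpha>)"
  shows "infinite {\<beta>. \<beta> < (eta_graph T :: 'o)} \<and> (cr_ordinal T :: 'o) = omega_add (eta_graph T)"
proof -
  obtain \<alpha>0 :: 'o where "\<alpha>0 < osucc \<alpha>0" "crle T \<alpha>0 = crle T (osucc \<alpha>0)"
    using assms(4) by blast
  then interpret unbounded_cop_win_tree T \<alpha>0
    using assms(1-3) by unfold_locales (auto simp: tree_def simple_graph_def)
  show ?thesis using eta_infinite omega_add_eta_eq_rho cr_ordinal_eq_rho by simp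
qed

end
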